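(* Let $\mathcal{G}_n$ be the set of binary words $w=w_1\cdots w_{2n}$ with $n$ zeros and $n$ ones, and $\mathrm{da}(w)=|\{i\in[n]: w_i\neq w_{2n+1-i}\}|$. For integers $0\le k\le n$ with $n-k$ even, $$|\{w\in\mathcal{G}_n:\mathrm{da}(w)=k\}|=\binom{n}{k}\binom{n-k}{\frac{n-k}{2}}2^k,$$ and this number is $0$ if $n-k$ is odd.
   Context: $[n]=\{1,2,\dots,n\}$. *)

theory Defs
  imports Main
begin

text \<open>Binary words of length 2n with n zeros and n ones; letters are 0/1 naturals,
  and w_i (1-indexed) is w ! (i - 1).\<close>
definition G :: "nat \<Rightarrow> nat list set" where
  "G n = {w. length w = 2 * n \<and> set w \<subseteq> {0, 1}
             \<and> length (filter (\<lambda>x. x = 0) w) = n \<and> length (filter (\<lambda>x. x = 1) w) = n}"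

definition da :: "nat \<Rightarrow> nat list \<Rightarrow> nat" where
  "da n w = card {i \<in> {1..n}. w ! (i - 1) \<noteq> w ! (2 * n + 1 - i - 1)}"

end

theory Submission
  imports Defs
begin

text \<open>Folding a word of length 2n at its middle pairs the letter w_i with w_{2n+1-i}; this is a
  bijection onto lists of n letter pairs, under which da counts the mismatched pairs and the
  number of zeros becomes 2a + k, where a counts the pairs (0, 0) and k the mismatched pairs.
  So the words in question correspond to pair lists with k mismatched pairs, each oriented in
  one of 2 ways, and a = (n - k)/2 pairs (0, 0) among the remaining n - k positions.\<close>

definition unfold_pairs :: "('a \<times> 'a) list \<Rightarrow> 'a list" where
  "unfold_pairs ps = map fst ps @ rev (map snd ps)"

lemma length_unfold_pairs [simp]: "length (unfold_pairs ps) = 2 * length ps"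
  by (simp add: unfold_pairs_def)

lemma nth_unfold_pairs_fst:
  "i < length ps \<Longrightarrow> unfold_pairs ps ! i = fst (ps ! i)"
  by (simp add: unfold_pairs_def nth_append)

lemma nth_unfold_pairs_snd:
  "i < length ps \<Longrightarrow> unfold_pairs ps ! (2 * length ps - 1 - i) = snd (ps ! i)"
  by (auto simp: unfold_pairs_def nth_append rev_nth)

lemma inj_on_unfold_pairs: "inj_on unfold_pairs {ps. length ps = n}"
proof (rule inj_onI)
  fix ps qs :: "('a \<times> 'a) list"
  assume "ps \<in> {ps. length ps = n}" "qs \<in> {ps. length ps = n}"
    and "unfold_pairs ps = unfold_pairs qs"
  then have "map fst ps = map fst qs" "map snd ps = map snd qs"
    by (auto simp: unfold_pairs_def)
  then show "ps = qs" by (metis zip_map_fst_snd)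
qed

lemma lists_length_double_eq_image_unfold_pairs:
  "{w. length w = 2 * n \<and> set w \<subseteq> A} = unfold_pairs ` {ps. length ps = n \<and> set ps \<subseteq> A \<times> A}"
proof (intro equalityI subsetI)
  fix w assume w: "w \<in> {w. length w = 2 * n \<and> set w \<subseteq> A}"
  define ps where "ps = zip (take n w) (rev (drop n w))"
  have "map fst ps = take n w" "map snd ps = rev (drop n w)"
    using w by (auto simp: ps_def)
  then have "unfold_pairs ps = w" by (simp add: unfold_pairs_def)
  moreover have "set ps \<subseteq> set w \<times> set w"
    using set_take_subset[of n w] set_drop_subset[of n w]
    by (force simp: ps_def dest: set_zip_leftD set_zip_rightD)
  moreover have "length ps = n"
    using w by (simp add: ps_def)
  ultimately show "w \<in> unfold_pairs ` {ps. length ps = n \<and> set ps \<subseteq> A \<times> A}"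
    using w by (intro image_eqI[of _ _ ps]) auto
qed (fastforce simp: unfold_pairs_def)

lemma length_filter_unfold_pairs:
  "length (filter Q (unfold_pairs ps)) =
     2 * length (filter (\<lambda>(x, y). Q x \<and> Q y) ps) + length (filter (\<lambda>(x, y). Q x \<noteq> Q y) ps)"
  by (induction ps) (auto simp: unfold_pairs_def)

lemma da_unfold_pairs:
  assumes "length ps = n"
  shows "da n (unfold_pairs ps) = length (filter (\<lambda>(x, y). x \<noteq> y) ps)"
proof -
  have "{i \<in> {1..n}. unfold_pairs ps ! (i - 1) \<noteq> unfold_pairs ps ! (2 * n + 1 - i - 1)}
      = Suc ` {j. j < length ps \<and> fst (ps ! j) \<noteq> snd (ps ! j)}" (is "?D = Suc ` ?J")
  proof (intro equalityI subsetI)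
    fix i assume "i \<in> ?D"
    then show "i \<in> Suc ` ?J"
      using assms nth_unfold_pairs_fst[of "i - 1" ps] nth_unfold_pairs_snd[of "i - 1" ps]
      by (auto simp: image_iff intro!: exI[of _ "i - 1"])
  next
    fix i assume "i \<in> Suc ` ?J"
    then obtain j where "i = Suc j" "j < n" "fst (ps ! j) \<noteq> snd (ps ! j)"
      using assms by blast
    then show "i \<in> ?D"
      using assms nth_unfold_pairs_fst[of j ps] nth_unfold_pairs_snd[of j ps] by auto
  qed
  then show ?thesis
    by (simp add: da_def card_image length_filter_conv_card case_prod_beta)
qed

lemma G_eq_zero_count:
  "G n = {w. length w = 2 * n \<and> set w \<subseteq> {0, 1} \<and> length (filter (\<lambda>x. x = 0) w) = n}"
proof -
  have "length (filter (\<lambda>x. x = 1) w) = length w - length (filter (\<lambda>x. x = 0) w)"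
    if "set w \<subseteq> {0, 1}" for w :: "nat list"
  proof -
    have "filter (\<lambda>x. x = 1) w = filter (\<lambda>x. x \<noteq> 0) w"
      using that by (auto intro: filter_cong)
    then show ?thesis using sum_length_filter_compl[of "\<lambda>x. x = 0" w] by simp
  qed
  then show ?thesis by (auto simp: G_def)
qed

definition bit_pair_lists :: "nat \<Rightarrow> nat \<Rightarrow> nat \<Rightarrow> (nat \<times> nat) list set" where
  "bit_pair_lists n a k = {ps. length ps = n \<and> set ps \<subseteq> {0, 1} \<times> {0, 1}
     \<and> length (filter (\<lambda>(x, y). x = 0 \<and> y = 0) ps) = a
     \<and> length (filter (\<lambda>(x, y). x \<noteq> y) ps) = k}"

lemma bit_pair_lists_0: "bit_pair_lists 0 a k = (if a = 0 \<and> k = 0 then {[]} else {})"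
  by (auto simp: bit_pair_lists_def)

lemma finite_bit_pair_lists: "finite (bit_pair_lists n a k)"
proof (rule finite_subset)
  show "bit_pair_lists n a k \<subseteq> {ps. set ps \<subseteq> {0, 1} \<times> {0, 1} \<and> length ps = n}"
    by (auto simp: bit_pair_lists_def)
qed (simp add: finite_lists_length_eq)

lemma bit_pair_lists_Suc:
  "bit_pair_lists (Suc n) a k =
     (if a > 0 then Cons (0, 0) ` bit_pair_lists n (a - 1) k else {})
     \<union> Cons (1, 1) ` bit_pair_lists n a k
     \<union> (if k > 0
        then Cons (0, 1) ` bit_pair_lists n a (k - 1) \<union> Cons (1, 0) ` bit_pair_lists n a (k - 1)
        else {})" (is "_ = ?R")
proof (rule set_eqI)
  fix ps :: "(nat \<times> nat) list"
  show "ps \<in> bit_pair_lists (Suc n) a k \<longleftrightarrow> ps \<in> ?R"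
    by (cases ps) (auto simp: bit_pair_lists_def)
qed

lemma card_bit_pair_lists_Suc:
  "card (bit_pair_lists (Suc n) a k) =
     (if a > 0 then card (bit_pair_lists n (a - 1) k) else 0) + card (bit_pair_lists n a k)
     + (if k > 0 then 2 * card (bit_pair_lists n a (k - 1)) else 0)"
proof -
  have card_Cons: "card (Cons p ` A) = card A" for p :: "nat \<times> nat" and A
    by (simp add: card_image)
  have Cons_images_disjoint: "p \<noteq> q \<Longrightarrow> Cons p ` A \<inter> Cons q ` B = {}"
    for p q :: "nat \<times> nat" and A B
    by auto
  show ?thesis
    unfolding bit_pair_lists_Suc
    by (simp add: card_Un_disjoint card_Cons finite_bit_pair_lists
        Int_Un_distrib Int_Un_distrib2 Cons_images_disjoint)
qed

lemma card_bit_pair_lists: "card (bit_pair_lists n a k) = (n choose k) * 2 ^ k * ((n - k) choose a)"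
proof (induction n arbitrary: a k)
  case 0
  then show ?case by (simp add: bit_pair_lists_0)
next
  case (Suc n)
  show ?case
  proof (cases "k \<le> n")
    case True
    then have "Suc n - k = Suc (n - k)"
      by simp
    with True show ?thesis
      by (cases a; cases k) (auto simp: card_bit_pair_lists_Suc Suc.IH algebra_simps Suc_diff_le)
  next
    case False
    then show ?thesis
      by (cases a; cases k) (auto simp: card_bit_pair_lists_Suc Suc.IH algebra_simps)
  qed
qed

lemma length_filter_zero_unfold_bit_pairs:
  assumes "set ps \<subseteq> {0, 1} \<times> {0 :: nat, 1}"
  shows "length (filter (\<lambda>x. x = 0) (unfold_pairs ps)) =
    2 * length (filter (\<lambda>(x, y). x = 0 \<and> y = 0) ps) + length (filter (\<lambda>(x, y). x \<noteq> y) ps)"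
proof -
  have "filter (\<lambda>(x, y). (x = 0) \<noteq> (y = 0)) ps = filter (\<lambda>(x, y). x \<noteq> y) ps"
    using assms by (auto intro!: filter_cong)
  then show ?thesis
    using length_filter_unfold_pairs[of "\<lambda>x. x = 0" ps] by simp
qed

lemma G_da_eq_UN_image_bit_pair_lists:
  "{w \<in> G n. da n w = k} = (\<Union>a \<in> {a. 2 * a + k = n}. unfold_pairs ` bit_pair_lists n a k)"
proof -
  let ?zeros = "\<lambda>w. length (filter (\<lambda>x. x = 0) w)"
  have "{w \<in> G n. da n w = k} =
      {w \<in> {w. length w = 2 * n \<and> set w \<subseteq> {0, 1}}. ?zeros w = n \<and> da n w = k}"
    by (auto simp: G_eq_zero_count)
  also have "\<dots> = {w \<in> unfold_pairs ` {ps. length ps = n \<and> set ps \<subseteq> {0, 1} \<times> {0, 1}}.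
      ?zeros w = n \<and> da n w = k}"
    by (simp only: lists_length_double_eq_image_unfold_pairs)
  also have "\<dots> = unfold_pairs ` {ps. length ps = n \<and> set ps \<subseteq> {0, 1} \<times> {0, 1}
      \<and> ?zeros (unfold_pairs ps) = n \<and> da n (unfold_pairs ps) = k}"
    by blast
  also have "\<dots> = (\<Union>a \<in> {a. 2 * a + k = n}. unfold_pairs ` bit_pair_lists n a k)"
    by (auto simp: bit_pair_lists_def da_unfold_pairs length_filter_zero_unfold_bit_pairs)
  finally show ?thesis .
qed

theorem mainTheorem7:
  fixes n k :: nat
  assumes "k \<le> n"
  shows "(even (n - k) \<longrightarrow>
            card {w \<in> G n. da n w = k} = (n choose k) * ((n - k) choose ((n - k) div 2)) * 2 ^ k)
       \<and> (odd (n - k) \<longrightarrow> card {w \<in> G n. da n w = k} = 0)"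
proof (intro conjI impI)
  assume "even (n - k)"
  then have "{a. 2 * a + k = n} = {(n - k) div 2}"
    using assms by auto
  then have "card {w \<in> G n. da n w = k} = card (unfold_pairs ` bit_pair_lists n ((n - k) div 2) k)"
    by (simp add: G_da_eq_UN_image_bit_pair_lists)
  also have "\<dots> = card (bit_pair_lists n ((n - k) div 2) k)"
    by (rule card_image, rule inj_on_subset[OF inj_on_unfold_pairs[of n]])
      (auto simp: bit_pair_lists_def)
  finally show "card {w \<in> G n. da n w = k} = (n choose k) * ((n - k) choose ((n - k) div 2)) * 2 ^ k"
    by (simp add: card_bit_pair_lists)
next
  assume "odd (n - k)"
  then have "{a. 2 * a + k = n} = {}"
    by auto
  then show "card {w \<in> G n. da n w = k} = 0"
    by (simp add: G_da_eq_UN_image_bit_pair_lists)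
qed

end
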